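(* Fix a Polish sample space $\Omega$ and let $F,R$ be partially ordered topological spaces that are Souslin spaces with Borel order relations. The constant injection $$\mathrm{const}:F\times R\to\mathrm{DP}_\Omega(F,R),\quad (x_F,x_R)\mapsto {\downarrow}x_F\times{\uparrow}x_R=\{(y_F,y_R): y_F\preceq x_F,\ x_R\preceq y_R\}$$ is quasi-measurable.
   Context: A Souslin space is a Hausdorff space that is a continuous image of a Polish space; analytic sets are continuous images of Polish spaces. Quasi-universal spaces: a set $A$ with a set of maps $\Omega\to A$ (random variables) containing constants and closed under precomposition with Borel measurable maps $\Omega\to\Omega$; a map $f:A\to B$ is quasi-measurable if $f\circ\alpha$ is a random variable of $B$ for every random variable $\alpha$ of $A$. Conventions: the random variables of $F$ and $R$ are the Borel measurable maps from $\Omega$; those of $F\times R$ are pairs of such maps. $\mathrm{DP}_\Omega(F,R)$ is the set of upper sets of $F^{\mathrm{op}}\times R$ ($F$ with reversed order, componentwise order) of the form $\uparrow A$ with $A\subseteq F^{\mathrm{op}}\times R$ analytic, whose random variables are the maps $\alpha:\Omega\to\mathrm{DP}_\Omega(F,R)$ with analytic feasible set $\{(\omega,x_F,x_R):(x_F,x_R)\in\alpha(\omega)\}\subseteq\Omega\times F\times R$. *)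

theory Defs
  imports "HOL-Analysis.Analysis"
begin

definition Polish_top :: "'a topology \<Rightarrow> bool" where
  "Polish_top X \<longleftrightarrow> completely_metrizable_space X \<and> separable_space X"

text \<open>Every Polish space has cardinality at most the continuum, so (up to homeomorphism)
  its carrier can be taken to be a subset of the type real.\<close>
definition analytic_in :: "'a topology \<Rightarrow> 'a set \<Rightarrow> bool" where
  "analytic_in X A \<longleftrightarrow>
     (\<exists>(P :: real topology) g. Polish_top P \<and> continuous_map P X g \<and> g ` topspace P = A)"

definition Souslin_space :: "'a topology \<Rightarrow> bool" where
  "Souslin_space X \<longleftrightarrow> Hausdorff_space X \<and> analytic_in X (topspace X)"

definition Borel_order :: "('a::{topological_space, order}) itself \<Rightarrow> bool" where
  "Borel_order _ \<longleftrightarrow> {p :: 'a \<times> 'a. fst p \<le> snd p} \<in> sets borel"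

text \<open>Up-closure of A in F^op \<times> R (componentwise order, F reversed).\<close>
definition up_opF :: "('f::order \<times> 'r::order) set \<Rightarrow> ('f \<times> 'r) set" where
  "up_opF A = {(yF, yR). \<exists>(aF, aR)\<in>A. yF \<le> aF \<and> aR \<le> yR}"

definition DP_set :: "('f::{topological_space,order} \<times> 'r::{topological_space,order}) set set" where
  "DP_set = {U. \<exists>A. analytic_in euclidean A \<and> U = up_opF A}"

definition DP_rv :: "('o::topological_space \<Rightarrow> ('f::{topological_space,order} \<times> 'r::{topological_space,order}) set) set" where
  "DP_rv = {\<alpha>. (\<forall>\<omega>. \<alpha> \<omega> \<in> DP_set) \<and>
               analytic_in euclidean {(\<omega>, xF, xR). (xF, xR) \<in> \<alpha> \<omega>}}"

definition pair_rv :: "('o::topological_space \<Rightarrow> ('f::topological_space \<times> 'r::topological_space)) set" where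
  "pair_rv = {(\<lambda>\<omega>. (bF \<omega>, bR \<omega>)) | bF bR.
               bF \<in> borel_measurable borel \<and> bR \<in> borel_measurable borel}"

definition quasi_measurable ::
  "('o \<Rightarrow> 'a) set \<Rightarrow> ('o \<Rightarrow> 'b) set \<Rightarrow> ('a \<Rightarrow> 'b) \<Rightarrow> bool" where
  "quasi_measurable RA RB f \<longleftrightarrow> (\<forall>\<alpha>\<in>RA. f \<circ> \<alpha> \<in> RB)"

definition const_DP :: "('f::order \<times> 'r::order) \<Rightarrow> ('f \<times> 'r) set" where
  "const_DP x = {(yF, yR). yF \<le> fst x \<and> snd x \<le> yR}"

end

theory Submission
  imports Defs
begin

(* The feasible set of const o (bF, bR) is {(omega, yF, yR). yF <= bF omega and bR omega <= yR},
   the intersection of the preimages of the Borel order relations of F and R under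
   (omega, yF, yR) |-> (yF, bF omega) and (omega, yF, yR) |-> (bR omega, yR).  These maps are Borel
   because a product of two Souslin spaces is hereditarily Lindelof (it is a continuous image
   of a second countable space), so each of its open sets is a countable union of open
   rectangles and its Borel sigma-algebra is the product sigma-algebra.  Hence the feasible set
   is Borel in the Souslin space Omega x F x R, and Borel subsets of a Souslin space are analytic:
   the analytic sets contain the open and the closed sets and are closed under countable unions
   and, in a Hausdorff space, under countable intersections (the sequences of points with a
   common image form a closed subspace of a countable product of Polish spaces). *)

section \<open>Polish spaces\<close>

lemma metrizable_separable_imp_second_countable:
  assumes "metrizable_space X" "separable_space X"
  shows "second_countable X"
proof -
  obtain M d where md: "Metric_space M d" and X: "X = Metric_space.mtopology M d"
    using assms(1) metrizable_space_def by blast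
  interpret Metric_space M d by (rule md)
  obtain C where C: "countable C" "C \<subseteq> M" "mtopology closure_of C = M"
    using assms(2) unfolding X by (metis separable_space_def topspace_mtopology)
  define B where "B = (\<lambda>(c,n). mball c (inverse (Suc n))) ` (C \<times> (UNIV::nat set))"
  show ?thesis unfolding second_countable_def X
  proof (intro exI[of _ B] conjI ballI allI impI)
    show "countable B" using C by (simp add: B_def)
    fix V assume "V \<in> B" then show "openin mtopology V" by (auto simp: B_def)
  next
    fix U x assume "openin mtopology U \<and> x \<in> U"
    then obtain r where r: "r > 0" "mball x r \<subseteq> U" and xM: "x \<in> M"
      using openin_mtopology by (meson openin_subset subsetD)
    obtain n where n: "inverse (real (Suc n)) < r/2"
      using r by (metis half_gt_zero_iff reals_Archimedean)
    have "x \<in> mtopology closure_of C" using C xM by simp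
    then obtain c where c: "c \<in> C" "c \<in> mball x (inverse (Suc n))"
      unfolding in_closure_of using xM
      by (meson centre_in_mball_iff inverse_positive_iff_positive of_nat_0_less_iff openin_mball zero_less_Suc)
    show "\<exists>V\<in>B. x \<in> V \<and> V \<subseteq> U"
    proof (intro bexI conjI)
      show "x \<in> mball c (inverse (Suc n))" using c by (auto simp: commute)
      show "mball c (inverse (Suc n)) \<subseteq> U"
      proof
        fix y assume y: "y \<in> mball c (inverse (Suc n))"
        have "d x y \<le> d x c + d c y" using c y by (intro triangle) auto
        also have "\<dots> < r" using c y n by auto
        finally show "y \<in> U" using r y xM by auto
      qed
      show "mball c (inverse (Suc n)) \<in> B" using c by (auto simp: B_def)
    qed
  qed
qed

definition initial_cylinder :: "(nat \<Rightarrow> 'a topology) \<Rightarrow> nat \<Rightarrow> (nat \<Rightarrow> 'a set) \<Rightarrow> (nat \<Rightarrow> 'a) set"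
  where "initial_cylinder X N V = PiE UNIV (\<lambda>i. if i < N then V i else topspace (X i))"

lemma openin_initial_cylinder:
  assumes "\<And>i. i < N \<Longrightarrow> openin (X i) (V i)"
  shows "openin (product_topology X UNIV) (initial_cylinder X N V)"
  unfolding initial_cylinder_def
proof (rule product_topology_basis)
  show "openin (X i) (if i < N then V i else topspace (X i))" for i
    using assms by auto
  show "finite {i. (if i < N then V i else topspace (X i)) \<noteq> topspace (X i)}"
    by (rule finite_subset[of _ "{..<N}"]) auto
qed

lemma initial_cylinder_mono:
  assumes "\<And>i. i < N \<Longrightarrow> V i \<subseteq> U i"
  shows "initial_cylinder X N V \<subseteq> initial_cylinder X N U"
  unfolding initial_cylinder_def by (rule PiE_mono) (use assms in auto)

lemma openin_product_topology_nat_contains_initial_cylinder: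
  assumes "openin (product_topology X UNIV) S" "x \<in> S"
  obtains U N where "\<And>i. openin (X i) (U i)" "\<And>i. x i \<in> U i" "initial_cylinder X N U \<subseteq> S"
proof -
  obtain U where U: "x \<in> PiE UNIV U" "\<And>i. openin (X i) (U i)"
    "finite {i. U i \<noteq> topspace (X i)}" "PiE UNIV U \<subseteq> S"
    using product_topology_open_contains_basis[OF assms] by blast
  obtain N where N: "\<And>i. U i \<noteq> topspace (X i) \<Longrightarrow> i < N"
    using finite_nat_bounded[OF U(3)] by auto
  have "(\<lambda>i. if i < N then U i else topspace (X i)) = U"
  proof
    show "(if i < N then U i else topspace (X i)) = U i" for i
      using N[of i] by auto
  qed
  then show ?thesis
    using that[of U N] U(2,4) PiE_mem[OF U(1) UNIV_I] by (simp add: initial_cylinder_def)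
qed

lemma second_countable_product_topology_nat:
  assumes "\<And>n. second_countable (X n)"
  shows "second_countable (product_topology X (UNIV::nat set))"
proof -
  obtain B where B: "\<And>n. countable (B n)" "\<And>n V. V \<in> B n \<Longrightarrow> openin (X n) V"
    "\<And>n U x. openin (X n) U \<Longrightarrow> x \<in> U \<Longrightarrow> \<exists>V \<in> B n. x \<in> V \<and> V \<subseteq> U"
    using assms unfolding second_countable_def by metis
  define \<B> where "\<B> = (\<Union>N. initial_cylinder X N ` PiE {..<N} B)"
  have "countable \<B>"
    unfolding \<B>_def by (intro countable_UN countable_image countable_PiE) (auto simp: B)
  moreover have "openin (product_topology X UNIV) W" if "W \<in> \<B>" for W
    using that B(2) unfolding \<B>_def by (auto intro!: openin_initial_cylinder)
  moreover have "\<exists>W\<in>\<B>. x \<in> W \<and> W \<subseteq> S"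
    if S: "openin (product_topology X UNIV) S" and x: "x \<in> S" for S x
  proof -
    obtain U N where U: "\<And>i. openin (X i) (U i)" "\<And>i. x i \<in> U i"
      "initial_cylinder X N U \<subseteq> S"
      using openin_product_topology_nat_contains_initial_cylinder[OF S x] by blast
    have "\<forall>i. \<exists>V. V \<in> B i \<and> x i \<in> V \<and> V \<subseteq> U i"
      using B(3)[OF U(1,2)] by blast
    then obtain V where V: "\<forall>i. V i \<in> B i \<and> x i \<in> V i \<and> V i \<subseteq> U i"
      by (rule choice[THEN exE])
    let ?W = "initial_cylinder X N (restrict V {..<N})"
    have "?W \<in> \<B>"
      unfolding \<B>_def using V by (intro UN_I[of N] imageI) auto
    moreover have "x \<in> ?W"
    proof -
      have "x i \<in> (if i < N then restrict V {..<N} i else topspace (X i))" for i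
        using V openin_subset[OF U(1)[of i]] U(2)[of i] by auto
      then show ?thesis unfolding initial_cylinder_def by (simp add: PiE_iff)
    qed
    moreover have "?W \<subseteq> S"
      using initial_cylinder_mono[of N "restrict V {..<N}" U X] V U(3) by auto
    ultimately show ?thesis
      by blast
  qed
  ultimately show ?thesis
    unfolding second_countable_def by (intro exI[of _ \<B>]) blast
qed

lemma Polish_top_imp_second_countable: "Polish_top X \<Longrightarrow> second_countable X"
  unfolding Polish_top_def
  by (simp add: completely_metrizable_imp_metrizable_space metrizable_separable_imp_second_countable)

lemma Polish_top_imp_Hausdorff_space: "Polish_top X \<Longrightarrow> Hausdorff_space X"
  unfolding Polish_top_def
  by (simp add: completely_metrizable_imp_metrizable_space metrizable_imp_Hausdorff_space)

lemma Polish_top_closedin: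
  assumes "Polish_top X" "closedin X S"
  shows "Polish_top (subtopology X S)"
proof -
  have "second_countable (subtopology X S)"
    using Polish_top_imp_second_countable[OF assms(1)] by (rule second_countable_subtopology)
  then show ?thesis
    using assms unfolding Polish_top_def
    by (simp add: completely_metrizable_space_closedin second_countable_imp_separable_space)
qed

lemma Polish_top_openin:
  assumes "Polish_top X" "openin X S"
  shows "Polish_top (subtopology X S)"
proof -
  have "second_countable (subtopology X S)"
    using Polish_top_imp_second_countable[OF assms(1)] by (rule second_countable_subtopology)
  then show ?thesis
    using assms unfolding Polish_top_def
    by (simp add: completely_metrizable_space_openin second_countable_imp_separable_space)
qed

lemma homeomorphic_Polish_top: "X homeomorphic_space Y \<Longrightarrow> Polish_top X \<longleftrightarrow> Polish_top Y"
  unfolding Polish_top_def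
  by (simp add: homeomorphic_completely_metrizable_space homeomorphic_separable_space)

lemma Polish_top_prod_topology:
  assumes "Polish_top X" "Polish_top Y"
  shows "Polish_top (prod_topology X Y)"
  unfolding Polish_top_def
proof
  show "completely_metrizable_space (prod_topology X Y)"
    using assms by (simp add: Polish_top_def completely_metrizable_space_prod_topology)
  obtain C D where "countable C" "C \<subseteq> topspace X" "X closure_of C = topspace X"
    "countable D" "D \<subseteq> topspace Y" "Y closure_of D = topspace Y"
    using assms unfolding Polish_top_def separable_space_def by metis
  then show "separable_space (prod_topology X Y)"
    unfolding separable_space_def by (intro exI[of _ "C \<times> D"]) (auto simp: closure_of_Times)
qed

lemma Polish_top_product_topology_nat:
  assumes "\<And>n. Polish_top (X n)"
  shows "Polish_top (product_topology X (UNIV::nat set))"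
proof -
  have "second_countable (product_topology X UNIV)"
    using assms by (simp add: Polish_top_imp_second_countable second_countable_product_topology_nat)
  then show ?thesis
    using assms unfolding Polish_top_def
    by (simp add: completely_metrizable_space_product_topology second_countable_imp_separable_space)
qed

lemma Polish_top_discrete_topology: "countable U \<Longrightarrow> Polish_top (discrete_topology U)"
  by (simp add: Polish_top_def completely_metrizable_space_discrete_topology
      separable_space_discrete_topology)

lemma Polish_top_euclidean: "Polish_top (euclidean :: 'a::polish_space topology)"
proof -
  obtain \<B> :: "'a set set" where \<B>: "countable \<B>" "topological_basis \<B>"
    using ex_countable_basis by blast
  have "second_countable (euclidean :: 'a topology)"
    unfolding second_countable_def
  proof (intro exI[of _ \<B>] conjI ballI allI impI)
    show "openin euclidean V" if "V \<in> \<B>" for V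
      using \<B>(2) that topological_basis_open by auto
    show "\<exists>V\<in>\<B>. x \<in> V \<and> V \<subseteq> U" if "openin euclidean U \<and> x \<in> U" for U x
      using topological_basisE[OF \<B>(2), of U x] that by auto
  qed (rule \<B>(1))
  then show ?thesis
    unfolding Polish_top_def
    by (simp add: completely_metrizable_space_euclidean second_countable_imp_separable_space)
qed

lemma homeomorphic_space_pullback_inj:
  assumes "inj_on e (topspace X)"
  shows "X homeomorphic_space pullback_topology (e ` topspace X) (inv_into (topspace X) e) X"
    (is "_ homeomorphic_space ?Y")
proof -
  let ?e' = "inv_into (topspace X) e"
  have "continuous_map X ?Y e"
  proof (rule continuous_map_pullback')
    show "continuous_map X X (?e' \<circ> e)"
      using assms by (auto intro: continuous_map_eq[OF continuous_map_id])
  qed auto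
  moreover have "continuous_map ?Y X ?e'"
    using continuous_map_pullback[OF continuous_map_id] by (simp add: o_def)
  ultimately have "homeomorphic_maps X ?Y e ?e'"
    using assms by (auto simp: homeomorphic_maps_def topspace_pullback_topology)
  then show ?thesis
    unfolding homeomorphic_space_def by blast
qed

lemma second_countable_Hausdorff_imp_inj_real:
  assumes "second_countable X" "Hausdorff_space X"
  obtains e :: "'a \<Rightarrow> real" where "inj_on e (topspace X)"
proof -
  obtain \<B> where \<B>: "countable \<B>"
    "\<And>U x. openin X U \<Longrightarrow> x \<in> U \<Longrightarrow> \<exists>V \<in> \<B>. x \<in> V \<and> V \<subseteq> U"
    using assms(1) unfolding second_countable_def by metis
  define code where "code x = to_nat_on \<B> ` {V \<in> \<B>. x \<in> V}" for x
  have "inj_on code (topspace X)"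
  proof (rule inj_onI, rule ccontr)
    fix x y assume x: "x \<in> topspace X" and y: "y \<in> topspace X"
      and eq: "code x = code y" and "x \<noteq> y"
    then obtain U W where UW: "openin X U" "openin X W" "x \<in> U" "y \<in> W" "disjnt U W"
      using assms(2) unfolding Hausdorff_space_def by metis
    obtain V where V: "V \<in> \<B>" "x \<in> V" "V \<subseteq> U" using \<B>(2) UW by metis
    have "to_nat_on \<B> V \<in> code y" using eq V unfolding code_def by auto
    then obtain V' where "V' \<in> \<B>" "y \<in> V'" "to_nat_on \<B> V = to_nat_on \<B> V'"
      unfolding code_def by auto
    then have "V = V'" using V \<B>(1) by simp
    then show False using UW V \<open>y \<in> V'\<close> by (auto simp: disjnt_def)
  qed
  moreover obtain g :: "nat set \<Rightarrow> real" where "inj g"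
    using nat_sets_eqpoll_reals unfolding eqpoll_def bij_betw_def by blast
  ultimately have "inj_on (g \<circ> code) (topspace X)"
    by (simp add: comp_inj_on inj_on_subset)
  then show ?thesis by (rule that)
qed

lemma Polish_top_real_copy:
  assumes "Polish_top X"
  obtains Y :: "real topology" where "Polish_top Y" "X homeomorphic_space Y"
proof -
  obtain e :: "'a \<Rightarrow> real" where "inj_on e (topspace X)"
    using second_countable_Hausdorff_imp_inj_real
      Polish_top_imp_second_countable[OF assms] Polish_top_imp_Hausdorff_space[OF assms] .
  then have hom: "X homeomorphic_space pullback_topology (e ` topspace X) (inv_into (topspace X) e) X"
    by (rule homeomorphic_space_pullback_inj)
  show ?thesis
    using that[OF _ hom] homeomorphic_Polish_top[OF hom] assms by blast
qed

section \<open>Analytic sets\<close>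

lemma analytic_inI:
  assumes "Polish_top P" "continuous_map P X g" "g ` topspace P = A"
  shows "analytic_in X A"
proof -
  obtain Q :: "real topology" where Q: "Polish_top Q" "P homeomorphic_space Q"
    using Polish_top_real_copy[OF assms(1)] .
  then obtain h k where hk: "homeomorphic_maps P Q h k"
    unfolding homeomorphic_space_def by blast
  then have "continuous_map Q X (g \<circ> k)"
    using assms(2) continuous_map_compose homeomorphic_maps_def by blast
  moreover have "(g \<circ> k) ` topspace Q = A"
    using hk assms(3) homeomorphic_imp_surjective_map homeomorphic_maps_map
    by (metis image_comp)
  ultimately show ?thesis
    unfolding analytic_in_def using Q(1) by blast
qed

lemma analytic_in_subset_topspace: "analytic_in X A \<Longrightarrow> A \<subseteq> topspace X"
  unfolding analytic_in_def using continuous_map_image_subset_topspace by blast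

lemma analytic_in_empty: "analytic_in X {}"
  by (rule analytic_inI[OF Polish_top_discrete_topology[of "{}"], of X "\<lambda>_. undefined"]) auto

lemma analytic_in_singleton: "x \<in> topspace X \<Longrightarrow> analytic_in X {x}"
  by (rule analytic_inI[OF Polish_top_discrete_topology[of "{x}"], of X "\<lambda>_. x"]) auto

lemma analytic_in_closedin:
  assumes "analytic_in X (topspace X)" "closedin X C"
  shows "analytic_in X C"
proof -
  obtain P :: "real topology" and g where P: "Polish_top P" "continuous_map P X g"
    "g ` topspace P = topspace X"
    using assms(1) unfolding analytic_in_def by blast
  let ?S = "{x \<in> topspace P. g x \<in> C}"
  have "Polish_top (subtopology P ?S)"
    using P(1) closedin_continuous_map_preimage[OF P(2) assms(2)] by (rule Polish_top_closedin)
  moreover have "continuous_map (subtopology P ?S) X g"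
    using P(2) by (rule continuous_map_from_subtopology)
  moreover have "g ` topspace (subtopology P ?S) = C"
    using P(3) closedin_subset[OF assms(2)] by auto
  ultimately show ?thesis by (rule analytic_inI)
qed

lemma analytic_in_openin:
  assumes "analytic_in X (topspace X)" "openin X C"
  shows "analytic_in X C"
proof -
  obtain P :: "real topology" and g where P: "Polish_top P" "continuous_map P X g"
    "g ` topspace P = topspace X"
    using assms(1) unfolding analytic_in_def by blast
  let ?S = "{x \<in> topspace P. g x \<in> C}"
  have "Polish_top (subtopology P ?S)"
    using P(1) openin_continuous_map_preimage[OF P(2) assms(2)] by (rule Polish_top_openin)
  moreover have "continuous_map (subtopology P ?S) X g"
    using P(2) by (rule continuous_map_from_subtopology)
  moreover have "g ` topspace (subtopology P ?S) = C"
    using P(3) openin_subset[OF assms(2)] by auto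
  ultimately show ?thesis by (rule analytic_inI)
qed

lemma image_agreeing_sequences_eq_Inter:
  assumes "\<And>n. g n ` topspace (P n) = A n"
  shows "(\<lambda>p. g 0 (p 0)) ` {p \<in> topspace (product_topology P UNIV). \<forall>n. g n (p n) = g 0 (p 0)}
           = (\<Inter>n::nat. A n)"
proof
  show "(\<lambda>p. g 0 (p 0)) ` {p \<in> topspace (product_topology P UNIV). \<forall>n. g n (p n) = g 0 (p 0)}
          \<subseteq> (\<Inter>n. A n)"
  proof clarify
    fix p n assume "p \<in> topspace (product_topology P UNIV)" "\<forall>n. g n (p n) = g 0 (p 0)"
    then have "p n \<in> topspace (P n)" "g n (p n) = g 0 (p 0)"
      by auto
    then show "g 0 (p 0) \<in> A n"
      using assms[of n] by (metis image_eqI)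
  qed
  show "(\<Inter>n. A n) \<subseteq>
          (\<lambda>p. g 0 (p 0)) ` {p \<in> topspace (product_topology P UNIV). \<forall>n. g n (p n) = g 0 (p 0)}"
  proof
    fix x assume "x \<in> (\<Inter>n. A n)"
    then have "\<forall>n. \<exists>q. q \<in> topspace (P n) \<and> g n q = x"
      using assms by (metis INT_iff UNIV_I imageE)
    then obtain p where p: "\<forall>n. p n \<in> topspace (P n) \<and> g n (p n) = x"
      by (rule choice[THEN exE])
    then have "p \<in> {p \<in> topspace (product_topology P UNIV). \<forall>n. g n (p n) = g 0 (p 0)}"
      by (simp add: PiE_iff)
    moreover have "x = g 0 (p 0)" using p by simp
    ultimately show "x \<in> (\<lambda>p. g 0 (p 0)) `
        {p \<in> topspace (product_topology P UNIV). \<forall>n. g n (p n) = g 0 (p 0)}"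
      by blast
  qed
qed

lemma analytic_in_Inter:
  assumes X: "Hausdorff_space X" and A: "\<And>n::nat. analytic_in X (A n)"
  shows "analytic_in X (\<Inter>n. A n)"
proof -
  obtain P :: "nat \<Rightarrow> real topology" and g where P: "\<And>n. Polish_top (P n)"
    "\<And>n. continuous_map (P n) X (g n)" "\<And>n. g n ` topspace (P n) = A n"
    using A unfolding analytic_in_def by metis
  let ?T = "product_topology P UNIV"
  define Z where "Z = {p \<in> topspace ?T. \<forall>n. g n (p n) = g 0 (p 0)}"
  have cont: "continuous_map ?T X (\<lambda>p. g n (p n))" for n
    using continuous_map_compose[OF continuous_map_product_projection[of n UNIV P] P(2)[of n]]
    by (simp add: o_def)
  have Z: "Z = (\<Inter>n. {p \<in> topspace ?T. g n (p n) = g 0 (p 0)})"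
    unfolding Z_def by auto
  have "closedin ?T Z"
    unfolding Z using closedin_continuous_maps_eq[OF X cont cont] by (intro closedin_Inter) auto
  then have "Polish_top (subtopology ?T Z)"
    using Polish_top_closedin Polish_top_product_topology_nat P(1) by blast
  moreover have "continuous_map (subtopology ?T Z) X (\<lambda>p. g 0 (p 0))"
    using cont by (rule continuous_map_from_subtopology)
  moreover have "(\<lambda>p. g 0 (p 0)) ` topspace (subtopology ?T Z) = (\<Inter>n. A n)"
  proof -
    have "topspace (subtopology ?T Z) = Z"
      unfolding Z_def by auto
    then show ?thesis
      unfolding Z_def using image_agreeing_sequences_eq_Inter[of g P A, OF P(3)] by simp
  qed
  ultimately show ?thesis by (rule analytic_inI)
qed

lemma continuous_map_apply_at_index:
  assumes "\<And>k. continuous_map (P k) X (g k)"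
  shows "continuous_map (prod_topology (discrete_topology UNIV) (product_topology P UNIV)) X
           (\<lambda>(k, p). g k (p k))"
    (is "continuous_map ?D X ?G")
proof (rule pasting_lemma[where I=UNIV and T="\<lambda>k. {k} \<times> topspace (product_topology P UNIV)"
      and f="\<lambda>_. ?G"])
  show "openin ?D ({k} \<times> topspace (product_topology P UNIV))" for k
    using openin_topspace[of "product_topology P UNIV"] by (simp add: openin_prod_Times_iff)
  have "continuous_map ?D X (\<lambda>z. g k (snd z k))" for k
    using continuous_map_compose[OF continuous_map_snd
        continuous_map_compose[OF continuous_map_product_projection[of k UNIV P] assms[of k]]]
    by (simp add: o_def)
  then show "continuous_map (subtopology ?D ({k} \<times> topspace (product_topology P UNIV))) X ?G" for k
    by (rule continuous_map_eq[OF continuous_map_from_subtopology]) auto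
  show "\<exists>j. j \<in> UNIV \<and> z \<in> {j} \<times> topspace (product_topology P UNIV) \<and> ?G z = ?G z"
    if "z \<in> topspace ?D" for z
    using that by (cases z) simp
qed simp_all

lemma analytic_in_Union_nonempty:
  assumes A: "\<And>n::nat. analytic_in X (A n)" and nonempty: "\<And>n. A n \<noteq> {}"
  shows "analytic_in X (\<Union>n. A n)"
proof -
  obtain P :: "nat \<Rightarrow> real topology" and g where P: "\<And>n. Polish_top (P n)"
    "\<And>n. continuous_map (P n) X (g n)" "\<And>n. g n ` topspace (P n) = A n"
    using A unfolding analytic_in_def by metis
  let ?T = "product_topology P UNIV"
  let ?D = "prod_topology (discrete_topology (UNIV::nat set)) ?T"
  let ?G = "\<lambda>(k, p). g k (p k)"
  have "\<forall>n. \<exists>q. q \<in> topspace (P n)"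
    using P(3) nonempty by (metis equals0I image_empty)
  then obtain p0 where p0: "\<forall>n. p0 n \<in> topspace (P n)"
    by (rule choice[THEN exE])
  have "Polish_top ?D"
    by (intro Polish_top_prod_topology Polish_top_discrete_topology
        Polish_top_product_topology_nat P(1)) simp
  moreover have "continuous_map ?D X ?G"
    using P(2) by (rule continuous_map_apply_at_index)
  moreover have "?G ` topspace ?D = (\<Union>n. A n)"
  proof
    show "?G ` topspace ?D \<subseteq> (\<Union>n. A n)"
    proof (rule image_subsetI)
      fix z assume "z \<in> topspace ?D"
      then obtain k p where "z = (k, p)" "p \<in> topspace ?T" by auto
      then show "?G z \<in> (\<Union>n. A n)" using P(3)[of k] by (auto simp: PiE_iff)
    qed
    show "(\<Union>n. A n) \<subseteq> ?G ` topspace ?D"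
    proof
      fix x assume "x \<in> (\<Union>n. A n)"
      then obtain k where "x \<in> g k ` topspace (P k)"
        using P(3) by auto
      then obtain q where q: "q \<in> topspace (P k)" "g k q = x"
        by blast
      then have "(k, p0(k := q)) \<in> topspace ?D"
        using p0 by (auto simp: PiE_iff)
      moreover have "x = ?G (k, p0(k := q))" using q by simp
      ultimately show "x \<in> ?G ` topspace ?D" by blast
    qed
  qed
  ultimately show ?thesis by (rule analytic_inI)
qed

lemma analytic_in_Union:
  assumes A: "\<And>n::nat. analytic_in X (A n)"
  shows "analytic_in X (\<Union>n. A n)"
proof (cases "\<forall>n. A n = {}")
  case True
  then show ?thesis by (simp add: analytic_in_empty)
next
  case False
  then obtain n0 where "A n0 \<noteq> {}" by blast
  define A' where "A' n = (if A n = {} then A n0 else A n)" for n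
  have "analytic_in X (\<Union>n. A' n)"
    using A \<open>A n0 \<noteq> {}\<close> by (intro analytic_in_Union_nonempty) (simp_all add: A'_def)
  moreover have "(\<Union>n. A' n) = (\<Union>n. A n)"
    unfolding A'_def by (auto split: if_splits)
  ultimately show ?thesis by simp
qed

lemma analytic_in_sigma_sets:
  assumes X: "Souslin_space X" and B: "B \<in> sigma_sets (topspace X) {U. openin X U}"
  shows "analytic_in X B \<and> analytic_in X (topspace X - B)"
  using B
proof induction
  case (Basic U)
  then show ?case
    using X unfolding Souslin_space_def
    by (auto intro: analytic_in_openin analytic_in_closedin)
next
  case Empty
  then show ?case using X by (simp add: Souslin_space_def analytic_in_empty)
next
  case (Compl B)
  moreover have "topspace X - (topspace X - B) = B"
    using Compl analytic_in_subset_topspace by blast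
  ultimately show ?case by simp
next
  case (Union B)
  have "analytic_in X (\<Inter>i. topspace X - B i)"
    using Union.IH X unfolding Souslin_space_def by (intro analytic_in_Inter) auto
  then have "analytic_in X (topspace X - (\<Union>i. B i))"
    by (rule back_subst[where P="analytic_in X"]) blast
  moreover have "analytic_in X (\<Union>i. B i)"
    using Union.IH by (simp add: analytic_in_Union)
  ultimately show ?case by blast
qed

lemma analytic_in_borel:
  assumes "Souslin_space (euclidean :: 'a::topological_space topology)" "B \<in> sets (borel :: 'a measure)"
  shows "analytic_in euclidean B"
proof -
  have "B \<in> sigma_sets (topspace euclidean) {U. openin euclidean U}"
    using assms(2) by (simp add: sets_borel)
  then show ?thesis
    using analytic_in_sigma_sets[OF assms(1)] by blast
qed

lemma Souslin_space_prod_topology: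
  assumes "Souslin_space X" "Souslin_space Y"
  shows "Souslin_space (prod_topology X Y)"
proof -
  obtain P :: "real topology" and g where P: "Polish_top P" "continuous_map P X g"
    "g ` topspace P = topspace X"
    using assms(1) unfolding Souslin_space_def analytic_in_def by blast
  obtain Q :: "real topology" and h where Q: "Polish_top Q" "continuous_map Q Y h"
    "h ` topspace Q = topspace Y"
    using assms(2) unfolding Souslin_space_def analytic_in_def by blast
  have "analytic_in (prod_topology X Y) (topspace (prod_topology X Y))"
  proof (rule analytic_inI)
    show "Polish_top (prod_topology P Q)"
      using P(1) Q(1) by (rule Polish_top_prod_topology)
    show "continuous_map (prod_topology P Q) (prod_topology X Y) (\<lambda>(x, y). (g x, h y))"
      using P(2) Q(2) continuous_map_prod_top by blast
    show "(\<lambda>(x, y). (g x, h y)) ` topspace (prod_topology P Q) = topspace (prod_topology X Y)"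
      using P(3) Q(3) by (simp add: image_paired_Times)
  qed
  then show ?thesis
    using assms unfolding Souslin_space_def by (simp add: Hausdorff_space_prod_topology)
qed

lemma Souslin_space_euclidean: "Souslin_space (euclidean :: 'a::polish_space topology)"
  unfolding Souslin_space_def
  using analytic_inI[OF Polish_top_euclidean, of euclidean id] by simp

lemma Lindelof_space_analytic_in:
  assumes "analytic_in X A"
  shows "Lindelof_space (subtopology X A)"
proof -
  obtain P :: "real topology" and g where P: "Polish_top P" "continuous_map P X g"
    "g ` topspace P = A"
    using assms unfolding analytic_in_def by blast
  have "Lindelof_space P"
    using P(1) by (simp add: Polish_top_imp_second_countable second_countable_imp_Lindelof_space)
  moreover have "continuous_map P (subtopology X A) g"
    using P(2,3) by (auto simp: continuous_map_in_subtopology)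
  moreover have "g ` topspace P = topspace (subtopology X A)"
    using P(3) analytic_in_subset_topspace[OF assms] by auto
  ultimately show ?thesis
    by (rule Lindelof_space_continuous_map_image)
qed

section \<open>Borel sets of a product of Souslin spaces\<close>

lemma open_eq_countable_Union_open_Times:
  fixes W :: "('a::topological_space \<times> 'b::topological_space) set"
  assumes "Souslin_space (euclidean :: 'a topology)" "Souslin_space (euclidean :: 'b topology)"
    and "open W"
  obtains \<R> where "countable \<R>" "\<R> \<subseteq> {U \<times> V | U V. open U \<and> open V}" "\<Union>\<R> = W"
proof -
  define \<C> where "\<C> = {R \<in> {U \<times> V | U V. open U \<and> open V}. R \<subseteq> W}"
  have "Souslin_space (euclidean :: ('a \<times> 'b) topology)"
    using Souslin_space_prod_topology[OF assms(1,2)] by simp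
  then have "analytic_in euclidean W"
    using analytic_in_openin[of euclidean W] assms(3) unfolding Souslin_space_def by simp
  then have "Lindelof_space (subtopology euclidean W)"
    by (rule Lindelof_space_analytic_in)
  then have Lindelof: "\<exists>\<V>. countable \<V> \<and> \<V> \<subseteq> \<U> \<and> W \<subseteq> \<Union>\<V>"
    if "\<forall>U \<in> \<U>. openin euclidean U" "W \<subseteq> \<Union>\<U>" for \<U>
    using that Lindelof_space_subtopology_subset[of W euclidean] by auto
  have "\<forall>R \<in> \<C>. openin euclidean R"
    unfolding \<C>_def by (auto intro: open_Times)
  moreover have "W \<subseteq> \<Union>\<C>"
  proof
    fix z assume "z \<in> W"
    then obtain U V where "open U" "open V" "z \<in> U \<times> V" "U \<times> V \<subseteq> W"
      using open_prod_elim[OF assms(3)] by metis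
    then show "z \<in> \<Union>\<C>"
      unfolding \<C>_def by auto
  qed
  ultimately obtain \<R> where \<R>: "countable \<R>" "\<R> \<subseteq> \<C>" "W \<subseteq> \<Union>\<R>"
    using Lindelof by metis
  have "\<R> \<subseteq> {U \<times> V | U V. open U \<and> open V}"
    using \<R>(2) Collect_restrict unfolding \<C>_def by (rule order_trans)
  moreover have "\<Union>\<R> = W"
    using \<R>(2,3) unfolding \<C>_def by auto
  ultimately show ?thesis
    using \<R>(1) that by simp
qed

lemma sets_borel_subset_pair_measure:
  assumes "Souslin_space (euclidean :: 'a::topological_space topology)"
    and "Souslin_space (euclidean :: 'b::topological_space topology)"
  shows "sets (borel :: ('a \<times> 'b) measure) \<subseteq> sets (borel \<Otimes>\<^sub>M borel)"
proof -
  let ?P = "(borel :: 'a measure) \<Otimes>\<^sub>M (borel :: 'b measure)"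
  have "W \<in> sets ?P" if "open W" for W
  proof -
    obtain \<R> where \<R>: "countable \<R>" "\<R> \<subseteq> {U \<times> V | U V. open U \<and> open V}" "\<Union>\<R> = W"
      using open_eq_countable_Union_open_Times[OF assms \<open>open W\<close>] .
    have "\<R> \<subseteq> sets ?P"
      using \<R>(2) by auto
    then show ?thesis
      using sets.countable_Union[OF \<R>(1)] \<R>(3) by blast
  qed
  then have "sigma_sets (space ?P) {W. open W} \<subseteq> sets ?P"
    by (intro sets.sigma_sets_subset) auto
  then show ?thesis
    by (simp add: sets_borel space_pair_measure)
qed

lemma borel_measurable_Pair_Souslin:
  fixes f :: "'m \<Rightarrow> 'a::topological_space" and g :: "'m \<Rightarrow> 'b::topological_space"
  assumes "Souslin_space (euclidean :: 'a topology)" "Souslin_space (euclidean :: 'b topology)"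
    and "f \<in> borel_measurable M" "g \<in> borel_measurable M"
  shows "(\<lambda>x. (f x, g x)) \<in> borel_measurable M"
proof -
  have "measurable M ((borel :: 'a measure) \<Otimes>\<^sub>M (borel :: 'b measure)) \<subseteq> borel_measurable M"
    using sets_borel_subset_pair_measure[OF assms(1,2)]
    by (intro measurable_mono) (auto simp: space_pair_measure)
  then show ?thesis
    using measurable_Pair[OF assms(3,4)] by blast
qed

section \<open>The constant injection\<close>

lemma const_DP_in_DP_set: "const_DP x \<in> DP_set"
proof -
  have "const_DP x = up_opF {x}"
    unfolding const_DP_def up_opF_def by auto
  moreover have "analytic_in euclidean {x}"
    by (simp add: analytic_in_singleton)
  ultimately show ?thesis
    unfolding DP_set_def by blast
qed

lemma feasible_set_const_DP_borel:
  fixes bF :: "'o::topological_space \<Rightarrow> 'f::{topological_space,order}"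
    and bR :: "'o \<Rightarrow> 'r::{topological_space,order}"
  assumes "Souslin_space (euclidean :: 'f topology)" "Souslin_space (euclidean :: 'r topology)"
    and "Borel_order TYPE('f)" "Borel_order TYPE('r)"
    and "bF \<in> borel_measurable borel" "bR \<in> borel_measurable borel"
  shows "{(\<omega>, yF, yR). (yF, yR) \<in> const_DP (bF \<omega>, bR \<omega>)} \<in> sets borel"
proof -
  have fst_borel: "fst \<in> borel_measurable (borel :: ('o \<times> 'f \<times> 'r) measure)"
    and fst_snd_borel: "(\<lambda>z. fst (snd z)) \<in> borel_measurable (borel :: ('o \<times> 'f \<times> 'r) measure)"
    and snd_snd_borel: "(\<lambda>z. snd (snd z)) \<in> borel_measurable (borel :: ('o \<times> 'f \<times> 'r) measure)"
    by (intro borel_measurable_continuous_onI continuous_intros)+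
  have "(\<lambda>z :: 'o \<times> 'f \<times> 'r. (fst (snd z), bF (fst z))) -` {p. fst p \<le> snd p} \<in> sets borel"
    using borel_measurable_Pair_Souslin[OF assms(1,1) fst_snd_borel measurable_compose[OF fst_borel assms(5)]]
      assms(3) unfolding Borel_order_def by (rule measurable_sets_borel)
  moreover have "(\<lambda>z :: 'o \<times> 'f \<times> 'r. (bR (fst z), snd (snd z))) -` {p. fst p \<le> snd p} \<in> sets borel"
    using borel_measurable_Pair_Souslin[OF assms(2,2) measurable_compose[OF fst_borel assms(6)] snd_snd_borel]
      assms(4) unfolding Borel_order_def by (rule measurable_sets_borel)
  moreover have "{(\<omega>, yF, yR). (yF, yR) \<in> const_DP (bF \<omega>, bR \<omega>)} =
      (\<lambda>z. (fst (snd z), bF (fst z))) -` {p. fst p \<le> snd p} \<inter>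
      (\<lambda>z. (bR (fst z), snd (snd z))) -` {p. fst p \<le> snd p}"
    unfolding const_DP_def by auto
  ultimately show ?thesis
    by (simp add: sets.Int)
qed

theorem theorem6:
  assumes "Souslin_space (euclidean :: ('f::{topological_space,order}) topology)"
      and "Souslin_space (euclidean :: ('r::{topological_space,order}) topology)"
      and "Borel_order TYPE('f)"
      and "Borel_order TYPE('r)"
  shows "(\<forall>x. const_DP x \<in> (DP_set :: ('f \<times> 'r) set set)) \<and>
         quasi_measurable (pair_rv :: ('o::polish_space \<Rightarrow> 'f \<times> 'r) set) DP_rv const_DP"
proof -
  have Souslin: "Souslin_space (euclidean :: ('o \<times> 'f \<times> 'r) topology)"
    using Souslin_space_prod_topology[OF Souslin_space_euclidean
        Souslin_space_prod_topology[OF assms(1,2)]]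
    by simp
  have "const_DP \<circ> \<alpha> \<in> DP_rv" if rv: "\<alpha> \<in> pair_rv" for \<alpha> :: "'o \<Rightarrow> 'f \<times> 'r"
  proof -
    obtain bF bR where "\<alpha> = (\<lambda>\<omega>. (bF \<omega>, bR \<omega>))"
      and "bF \<in> borel_measurable borel" "bR \<in> borel_measurable borel"
      using rv unfolding pair_rv_def by blast
    then have "{(\<omega>, yF, yR). (yF, yR) \<in> (const_DP \<circ> \<alpha>) \<omega>} \<in> sets borel"
      using feasible_set_const_DP_borel[OF assms] by simp
    then have "analytic_in euclidean {(\<omega>, yF, yR). (yF, yR) \<in> (const_DP \<circ> \<alpha>) \<omega>}"
      by (rule analytic_in_borel[OF Souslin])
    then show ?thesis
      unfolding DP_rv_def by (simp add: const_DP_in_DP_set)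
  qed
  then show ?thesis
    unfolding quasi_measurable_def by (simp add: const_DP_in_DP_set)
qed

end
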